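(* Let $P$ be a finite poset, let $P^*\subseteq P$ be a set of marked elements containing all minimal elements of $P$, let $\lambda,\mu\colon P^*\to\mathbb{R}$ be two order-preserving maps, and let $P\setminus P^* = C\sqcup O$ be any partition. Then \[\mathcal{O}_{C,O}(P,\lambda)+\mathcal{O}_{C,O}(P,\mu)\subseteq \mathcal{O}_{C,O}(P,\lambda+\mu)\] (Minkowski sum), and \[\mathcal{O}^{\mathbb{Z}}_{C,O}(P,\lambda)+\mathcal{O}^{\mathbb{Z}}_{C,O}(P,\mu)\subseteq \mathcal{O}^{\mathbb{Z}}_{C,O}(P,\lambda+\mu).\]
   Context: $p\prec q$ denotes a covering relation in $P$. For a finite poset $P$, a subset $P^*\subseteq P$ (the marked elements, with $\min(P)\subseteq P^*$), an order-preserving map (marking) $\lambda\colon P^*\to\mathbb{R}$, and a partition $P\setminus P^*=C\sqcup O$ into chain elements $C$ and order elements $O$, the marked chain-order polyhedron $\mathcal{O}_{C,O}(P,\lambda)\subseteq\mathbb{R}^P$ is the set of all $\mathbf{x}=(x_p)_{p\in P}$ such that: (1) $x_a=\lambda(a)$ for all $a\in P^*$; (2) $x_p\ge 0$ for all $p\in C$; (3) for every saturated chain $a\prec p_1\prec\cdots\prec p_r\prec b$ in $P$ with $a,b\in P^*\sqcup O$, all $p_i\in C$, $r\ge 0$, one has $x_{p_1}+\cdots+x_{p_r}\le x_b-x_a$. We write $\mathcal{O}^{\mathbb{Z}}_{C,O}(P,\lambda)=\mathcal{O}_{C,O}(P,\lambda)\cap\mathbb{Z}^P$. *)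

theory Defs
  imports Main "HOL.Real"
begin

text \<open>A finite poset is modelled as a finite carrier set P of a type of class order,
with the induced order. Points of R^P are functions 'a => real vanishing outside P.\<close>

definition covers :: "'a::order set \<Rightarrow> 'a \<Rightarrow> 'a \<Rightarrow> bool" where
  "covers P p q \<longleftrightarrow> p \<in> P \<and> q \<in> P \<and> p < q \<and> \<not> (\<exists>r\<in>P. p < r \<and> r < q)"

definition saturated_chain :: "'a::order set \<Rightarrow> 'a list \<Rightarrow> bool" where
  "saturated_chain P xs \<longleftrightarrow> xs \<noteq> [] \<and> set xs \<subseteq> P \<and>
     (\<forall>i. Suc i < length xs \<longrightarrow> covers P (xs ! i) (xs ! Suc i))"

definition minimal_elements :: "'a::order set \<Rightarrow> 'a set" where
  "minimal_elements P = {p \<in> P. \<not> (\<exists>q\<in>P. q < p)}"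

definition marked_chain_order_polyhedron ::
  "'a::order set \<Rightarrow> 'a set \<Rightarrow> 'a set \<Rightarrow> 'a set \<Rightarrow> ('a \<Rightarrow> real) \<Rightarrow> ('a \<Rightarrow> real) set" where
  "marked_chain_order_polyhedron P Pm C Or lam =
     {x. (\<forall>p. p \<notin> P \<longrightarrow> x p = 0)
       \<and> (\<forall>a\<in>Pm. x a = lam a)
       \<and> (\<forall>p\<in>C. x p \<ge> 0)
       \<and> (\<forall>a b ps. saturated_chain P (a # ps @ [b]) \<and> a \<in> Pm \<union> Or \<and> b \<in> Pm \<union> Or
              \<and> set ps \<subseteq> C \<longrightarrow> sum_list (map x ps) \<le> x b - x a)}"

definition marked_chain_order_polyhedron_int ::
  "'a::order set \<Rightarrow> 'a set \<Rightarrow> 'a set \<Rightarrow> 'a set \<Rightarrow> ('a \<Rightarrow> real) \<Rightarrow> ('a \<Rightarrow> real) set" where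
  "marked_chain_order_polyhedron_int P Pm C Or lam =
     marked_chain_order_polyhedron P Pm C Or lam \<inter> {x. \<forall>p. x p \<in> \<int>}"

definition minkowski_sum :: "('a \<Rightarrow> real) set \<Rightarrow> ('a \<Rightarrow> real) set \<Rightarrow> ('a \<Rightarrow> real) set" where
  "minkowski_sum A B = {(\<lambda>p. x p + y p) | x y. x \<in> A \<and> y \<in> B}"

end

theory Submission
  imports Defs
begin

text \<open>Every defining constraint of the polyhedron is a linear inequality in x, and the marking
enters only through the right-hand sides x a = \<lambda> a; so the sum of a point for \<lambda> and a point
for \<mu> satisfies the constraints for \<lambda> + \<mu>, and integrality is preserved by addition.\<close>

lemma minkowski_sum_subsetI:
  assumes "\<And>x y. x \<in> A \<Longrightarrow> y \<in> B \<Longrightarrow> (\<lambda>p. x p + y p) \<in> D"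
  shows "minkowski_sum A B \<subseteq> D"
  using assms unfolding minkowski_sum_def by blast

lemma marked_chain_order_polyhedron_add:
  assumes x: "x \<in> marked_chain_order_polyhedron P Pm C Or lam"
    and y: "y \<in> marked_chain_order_polyhedron P Pm C Or mu"
  shows "(\<lambda>p. x p + y p) \<in> marked_chain_order_polyhedron P Pm C Or (\<lambda>a. lam a + mu a)"
  unfolding marked_chain_order_polyhedron_def
proof (intro CollectI conjI allI impI ballI)
  fix a b ps
  assume chain: "saturated_chain P (a # ps @ [b]) \<and> a \<in> Pm \<union> Or \<and> b \<in> Pm \<union> Or \<and> set ps \<subseteq> C"
  have "sum_list (map x ps) \<le> x b - x a"
    using x chain unfolding marked_chain_order_polyhedron_def by blast
  moreover have "sum_list (map y ps) \<le> y b - y a"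
    using y chain unfolding marked_chain_order_polyhedron_def by blast
  ultimately show "(\<Sum>p\<leftarrow>ps. x p + y p) \<le> (x b + y b) - (x a + y a)"
    by (simp add: sum_list_addf)
qed (use x y in \<open>auto simp: marked_chain_order_polyhedron_def\<close>)

lemma marked_chain_order_polyhedron_int_add:
  assumes "x \<in> marked_chain_order_polyhedron_int P Pm C Or lam"
    and "y \<in> marked_chain_order_polyhedron_int P Pm C Or mu"
  shows "(\<lambda>p. x p + y p) \<in> marked_chain_order_polyhedron_int P Pm C Or (\<lambda>a. lam a + mu a)"
  using assms marked_chain_order_polyhedron_add
  unfolding marked_chain_order_polyhedron_int_def by auto

theorem lemma2p1:
  fixes P Pm C Or :: "'a::order set" and lam mu :: "'a \<Rightarrow> real"
  assumes "finite P"
    and "Pm \<subseteq> P"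
    and "minimal_elements P \<subseteq> Pm"
    and "monotone_on Pm (\<le>) (\<le>) lam"
    and "monotone_on Pm (\<le>) (\<le>) mu"
    and "C \<union> Or = P - Pm"
    and "C \<inter> Or = {}"
  shows "minkowski_sum (marked_chain_order_polyhedron P Pm C Or lam)
                       (marked_chain_order_polyhedron P Pm C Or mu)
           \<subseteq> marked_chain_order_polyhedron P Pm C Or (\<lambda>a. lam a + mu a)
       \<and> minkowski_sum (marked_chain_order_polyhedron_int P Pm C Or lam)
                       (marked_chain_order_polyhedron_int P Pm C Or mu)
           \<subseteq> marked_chain_order_polyhedron_int P Pm C Or (\<lambda>a. lam a + mu a)"
  by (intro conjI minkowski_sum_subsetI
        marked_chain_order_polyhedron_add marked_chain_order_polyhedron_int_add)

end
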